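(* Let $M$ be a canonical dtpla and $N$ an earliest total dtop (all of whose states are reachable) such that $[\![M]\!]=[\![N]\!]$. Let $\varphi$ be the aheadness mapping from $N$ to $M$, and let $C\in\mathcal C_\Sigma$. Then (1) $N(C)\Phi=\mathrm{pref}(M,C)$, and (2) for every $v\in\mathbb N_+^*$, $q\in Q_N$ and $p\in P_M$: if $N(C)/v=\langle q,\bot\rangle$ then $\varphi(q,p)=M(C[p])/v$.
   Context: Trees and patterns. $T_\Delta(Z)$ is the set of trees over ranked alphabet $\Delta$ with extra nullary symbols $Z$; $t/v$ is the subtree at node $v\in\mathbb N_+^*$; $\bot$ is a special nullary symbol. For trees $t,t'$, $t\sqsubseteq t'$ means $t'$ is obtained from $t$ by replacing some occurrences of $\bot$ by trees; for a finite nonempty set $T$ of trees, $\sqcap T$ is the greatest lower bound w.r.t. $\sqsubseteq$ (largest common prefix, with $\bot$ at the highest nodes where the trees disagree). A $\Sigma$-context is $C\in T_\Sigma(\{\bot\})$ with exactly one occurrence of $\bot$; $\mathcal C_\Sigma$ is their set; $C[t]$ replaces $\bot$ by $t$. Dtlas. A dtla $M$ from $\Sigma$ to $\Delta$ consists of a finite set $Q_M$ of states, a total deterministic bottom-up tree automaton with finite state set $P_M$ and transitions $\delta(a,p_1,\dots,p_k)$, extended to $\delta_M:T_\Sigma\to P_M$ ($[\![p]\!]_M=\delta_M^{-1}(p)$), axioms $A_M(p)\in T_\Delta(Q_M(\{x_0\}))$, and at most one rule $q(a(x_1\langle p_1\rangle,\dots,x_k\langle p_k\rangle))\to\mathrm{rhs}_M(q,a,p_1,\dots,p_k)\in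 T_\Delta(Q_M(X_k))$ per $q,a,p_1,\dots,p_k$. Semantics: $q_M(a(s_1,\dots,s_k))=\mathrm{rhs}_M(q,a,\delta_M(s_1),\dots,\delta_M(s_k))[q'(x_i)\leftarrow q'_M(s_i)]$, $M(s)=A_M(\delta_M(s))[q(x_0)\leftarrow q_M(s)]$. Total: $[\![M]\!]$ total. A dtop is a dtla with a single look-ahead state $\bot$; write $q_N(s)$, $A_N$, $\mathrm{rhs}_N(q,a)$. A dtpla is a dtla with $|P_M|\ge2$. For $C\in\mathcal C_\Sigma$, $p\in P_M$, $M(C[p])\in T_\Delta(Q_M\times P_M)$ is the output on $C$ with the hole treated as a leaf of look-ahead state $p$ and $q_M(p)=\langle q,p\rangle$; for a dtop $N$, $N(C)=N(C[\bot])\in T_\Delta(Q_N\times\{\bot\})$. A state $q$ is reachable if $\langle q,p\rangle$ labels a node of $M(C[p])$ for some $C,p$. $M$ is la-uniform if there is $\rho_M:Q_M\to P_M$ such that the domain of $[\![q]\!]_M$ is $[\![\rho_M(q)]\!]_M$, every $q(x_0)$ in $A_M(p)$ has $\rho_M(q)=p$, every $q'(x_i)$ in $\mathrm{rhs}_M(q,a,p_1,\dots,p_k)$ has $\rho_M(q')=p_i$, and the rule for $q,a,p_1,\dots,p_k$ exists iff $\delta(a,p_1,\dots,p_k)=\rho_M(q)$. A dtla is earliest if there is no state $q$ and $d\in\Delta$ such that $q(s)$ has root label $d$ for all $s$ in the domain of $[\![q]\!]$. $M$ is canonical if it is total, la-uniform, earliest, all states reachable, and distinct states have distinct translations. $\mathrm{pref}(M,C)=\sqcap\{M(C[p])\mid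 p\in P_M\}$. For $t\in T_\Delta(Q_N\times\{\bot\})$, $t\Phi$ is $t$ with every $\langle q,\bot\rangle$ replaced by $\bot$. Aheadness mapping: the unique $\varphi:Q_N\times P_M\to T_\Delta(Q_M\times P_M)$ with $M(C[p])=N(C)[\langle q,\bot\rangle\leftarrow\varphi(q,p)\mid q\in Q_N]$ for all $C\in\mathcal C_\Sigma$, $p\in P_M$. *)

theory Defs
  imports Main
begin

text \<open>For a ranked alphabet,
  well-formedness (wf_tr) checks labels and arities; leaves Var v are the extra
  nullary symbols (states, look-ahead holes, or the special symbol bottom).\<close>

datatype (labs: 'a, vars: 'v) tr = Sym 'a "('a,'v) tr list" | Var 'v
  for map: tmap

fun wf_tr :: "'a set \<Rightarrow> ('a \<Rightarrow> nat) \<Rightarrow> ('a,'v) tr \<Rightarrow> bool" where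
  "wf_tr A rk (Var v) = True"
| "wf_tr A rk (Sym a ts) = (a \<in> A \<and> length ts = rk a \<and> (\<forall>t\<in>set ts. wf_tr A rk t))"

definition ground :: "'a set \<Rightarrow> ('a \<Rightarrow> nat) \<Rightarrow> ('a,'v) tr \<Rightarrow> bool" where
  "ground A rk t \<longleftrightarrow> wf_tr A rk t \<and> vars t = {}"

fun nvars :: "('a,'v) tr \<Rightarrow> nat" where
  "nvars (Var v) = 1"
| "nvars (Sym a ts) = sum_list (map nvars ts)"

text \<open>Sigma-contexts: trees in T_Sigma({bot}) (bot = the unit leaf) with exactly one bot.\<close>
definition is_context :: "'a set \<Rightarrow> ('a \<Rightarrow> nat) \<Rightarrow> ('a,unit) tr \<Rightarrow> bool" where
  "is_context A rk C \<longleftrightarrow> wf_tr A rk C \<and> nvars C = 1"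

fun tsubst :: "('a,'v) tr \<Rightarrow> ('v \<Rightarrow> ('a,'w) tr) \<Rightarrow> ('a,'w) tr" where
  "tsubst (Var v) f = f v"
| "tsubst (Sym a ts) f = Sym a (map (\<lambda>t. tsubst t f) ts)"

fun osubst :: "('a,'v) tr \<Rightarrow> ('v \<Rightarrow> ('a,'w) tr option) \<Rightarrow> ('a,'w) tr option" where
  "osubst (Var v) f = f v"
| "osubst (Sym a ts) f =
     (let rs = map (\<lambda>t. osubst t f) ts in
      if None \<in> set rs then None else Some (Sym a (map the rs)))"

text \<open>Subtree t/v at node v, a list of positive integers (1-based child indices);
  None if v is not a node of t.\<close>
fun subt :: "('a,'v) tr \<Rightarrow> nat list \<Rightarrow> ('a,'v) tr option" where
  "subt t [] = Some t"
| "subt (Var x) (i # v) = None"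
| "subt (Sym a ts) (i # v) = (if 1 \<le> i \<and> i \<le> length ts then subt (ts ! (i - 1)) v else None)"

section \<open>Patterns: leaves 'z option, where None is the special symbol bot\<close>

inductive pat_le :: "('a,'z option) tr \<Rightarrow> ('a,'z option) tr \<Rightarrow> bool" where
  bot: "pat_le (Var None) t"
| var: "pat_le (Var (Some z)) (Var (Some z))"
| sym: "list_all2 pat_le ts us \<Longrightarrow> pat_le (Sym a ts) (Sym a us)"

definition is_glb :: "('a,'z option) tr set \<Rightarrow> ('a,'z option) tr \<Rightarrow> bool" where
  "is_glb T t \<longleftrightarrow> (\<forall>u\<in>T. pat_le t u) \<and> (\<forall>t'. (\<forall>u\<in>T. pat_le t' u) \<longrightarrow> pat_le t' t)"

definition Glb :: "('a,'z option) tr set \<Rightarrow> ('a,'z option) tr" where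
  "Glb T = (THE t. is_glb T t)"

definition Phi :: "('a,'v) tr \<Rightarrow> ('a,'z option) tr" where
  "Phi t = tmap id (\<lambda>_. None) t"

definition erase :: "('a,'v) tr \<Rightarrow> ('a,unit) tr" where
  "erase t = tmap id (\<lambda>_. ()) t"

text \<open>st = Q_M, la = P_M, dlt = delta, axm p = A_M(p) (leaf q stands for q(x0)),
  rul q a [p1..pk] = rhs_M(q,a,p1..pk) if the rule exists (leaf (q',i) stands for q'(x_i)).\<close>
record ('s,'d,'q,'p) dtla =
  st  :: "'q set"
  la  :: "'p set"
  dlt :: "'s \<Rightarrow> 'p list \<Rightarrow> 'p"
  axm :: "'p \<Rightarrow> ('d,'q) tr"
  rul :: "'q \<Rightarrow> 's \<Rightarrow> 'p list \<Rightarrow> ('d,'q \<times> nat) tr option"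

definition is_dtla ::
  "'s set \<Rightarrow> ('s \<Rightarrow> nat) \<Rightarrow> 'd set \<Rightarrow> ('d \<Rightarrow> nat) \<Rightarrow> ('s,'d,'q,'p) dtla \<Rightarrow> bool" where
  "is_dtla Sig rkS Del rkD M \<longleftrightarrow>
     finite Sig \<and> finite Del \<and> finite (st M) \<and> finite (la M) \<and>
     (\<forall>a\<in>Sig. \<forall>ps. length ps = rkS a \<and> set ps \<subseteq> la M \<longrightarrow> dlt M a ps \<in> la M) \<and>
     (\<forall>p\<in>la M. wf_tr Del rkD (axm M p) \<and> vars (axm M p) \<subseteq> st M) \<and>
     (\<forall>q\<in>st M. \<forall>a\<in>Sig. \<forall>ps r. length ps = rkS a \<and> set ps \<subseteq> la M \<and> rul M q a ps = Some r \<longrightarrow>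
         wf_tr Del rkD r \<and> vars r \<subseteq> st M \<times> {1..rkS a})"

text \<open>Look-ahead automaton run; a leaf Var p is a leaf of look-ahead state p.\<close>
fun dstate :: "('s,'d,'q,'p) dtla \<Rightarrow> ('s,'p) tr \<Rightarrow> 'p" where
  "dstate M (Var p) = p"
| "dstate M (Sym a ts) = dlt M a (map (dstate M) ts)"

fun qsem :: "('s,'d,'q,'p) dtla \<Rightarrow> 'q \<Rightarrow> ('s,'p) tr \<Rightarrow> ('d,'q \<times> 'p) tr option" where
  "qsem M q (Var p) = Some (Var (q, p))"
| "qsem M q (Sym a ts) =
     (let R = map (\<lambda>t q'. qsem M q' t) ts in
      case rul M q a (map (dstate M) ts) of
        None \<Rightarrow> None
      | Some r \<Rightarrow> osubst r (\<lambda>(q', i). if 1 \<le> i \<and> i \<le> length ts then (R ! (i - 1)) q' else None))"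

definition msem :: "('s,'d,'q,'p) dtla \<Rightarrow> ('s,'p) tr \<Rightarrow> ('d,'q \<times> 'p) tr option" where
  "msem M s = osubst (axm M (dstate M s)) (\<lambda>q. qsem M q s)"

definition ctx_out :: "('s,'d,'q,'p) dtla \<Rightarrow> ('s,unit) tr \<Rightarrow> 'p \<Rightarrow> ('d,'q \<times> 'p) tr option" where
  "ctx_out M C p = msem M (tsubst C (\<lambda>_. Var p))"

definition same_transl ::
  "'s set \<Rightarrow> ('s \<Rightarrow> nat) \<Rightarrow> ('s,'d,'q,'p) dtla \<Rightarrow> ('s,'d,'r,'u) dtla \<Rightarrow> bool" where
  "same_transl Sig rkS M N \<longleftrightarrow>
     (\<forall>s1 s2. ground Sig rkS s1 \<and> ground Sig rkS s2 \<and> erase s1 = erase s2 \<longrightarrow>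
        map_option erase (msem M s1) = map_option erase (msem N s2))"

definition total :: "'s set \<Rightarrow> ('s \<Rightarrow> nat) \<Rightarrow> ('s,'d,'q,'p) dtla \<Rightarrow> bool" where
  "total Sig rkS M \<longleftrightarrow> (\<forall>s. ground Sig rkS s \<longrightarrow> msem M s \<noteq> None)"

definition qdom :: "'s set \<Rightarrow> ('s \<Rightarrow> nat) \<Rightarrow> ('s,'d,'q,'p) dtla \<Rightarrow> 'q \<Rightarrow> ('s,'p) tr set" where
  "qdom Sig rkS M q = {s. ground Sig rkS s \<and> qsem M q s \<noteq> None}"

definition lasem :: "'s set \<Rightarrow> ('s \<Rightarrow> nat) \<Rightarrow> ('s,'d,'q,'p) dtla \<Rightarrow> 'p \<Rightarrow> ('s,'p) tr set" where
  "lasem Sig rkS M p = {s. ground Sig rkS s \<and> dstate M s = p}"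

definition la_uniform :: "'s set \<Rightarrow> ('s \<Rightarrow> nat) \<Rightarrow> ('s,'d,'q,'p) dtla \<Rightarrow> bool" where
  "la_uniform Sig rkS M \<longleftrightarrow> (\<exists>rho.
     (\<forall>q\<in>st M. rho q \<in> la M \<and> qdom Sig rkS M q = lasem Sig rkS M (rho q)) \<and>
     (\<forall>p\<in>la M. \<forall>q\<in>vars (axm M p). rho q = p) \<and>
     (\<forall>q\<in>st M. \<forall>a\<in>Sig. \<forall>ps r. length ps = rkS a \<and> set ps \<subseteq> la M \<and> rul M q a ps = Some r \<longrightarrow>
         (\<forall>(q', i)\<in>vars r. rho q' = ps ! (i - 1))) \<and>
     (\<forall>q\<in>st M. \<forall>a\<in>Sig. \<forall>ps. length ps = rkS a \<and> set ps \<subseteq> la M \<longrightarrow>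
         (rul M q a ps \<noteq> None \<longleftrightarrow> dlt M a ps = rho q)))"

definition earliest :: "'s set \<Rightarrow> ('s \<Rightarrow> nat) \<Rightarrow> 'd set \<Rightarrow> ('s,'d,'q,'p) dtla \<Rightarrow> bool" where
  "earliest Sig rkS Del M \<longleftrightarrow>
     \<not> (\<exists>q\<in>st M. \<exists>d\<in>Del. \<forall>s\<in>qdom Sig rkS M q. \<exists>ts. qsem M q s = Some (Sym d ts))"

definition reachable :: "'s set \<Rightarrow> ('s \<Rightarrow> nat) \<Rightarrow> ('s,'d,'q,'p) dtla \<Rightarrow> 'q \<Rightarrow> bool" where
  "reachable Sig rkS M q \<longleftrightarrow>
     (\<exists>C p t. is_context Sig rkS C \<and> p \<in> la M \<and> ctx_out M C p = Some t \<and> (q, p) \<in> vars t)"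

definition distinct_transl :: "'s set \<Rightarrow> ('s \<Rightarrow> nat) \<Rightarrow> ('s,'d,'q,'p) dtla \<Rightarrow> bool" where
  "distinct_transl Sig rkS M \<longleftrightarrow>
     (\<forall>q1\<in>st M. \<forall>q2\<in>st M. q1 \<noteq> q2 \<longrightarrow> (\<exists>s. ground Sig rkS s \<and> qsem M q1 s \<noteq> qsem M q2 s))"

definition canonical ::
  "'s set \<Rightarrow> ('s \<Rightarrow> nat) \<Rightarrow> 'd set \<Rightarrow> ('d \<Rightarrow> nat) \<Rightarrow> ('s,'d,'q,'p) dtla \<Rightarrow> bool" where
  "canonical Sig rkS Del rkD M \<longleftrightarrow>
     is_dtla Sig rkS Del rkD M \<and> total Sig rkS M \<and> la_uniform Sig rkS M \<and>
     earliest Sig rkS Del M \<and> (\<forall>q\<in>st M. reachable Sig rkS M q) \<and> distinct_transl Sig rkS M"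

definition is_dtpla ::
  "'s set \<Rightarrow> ('s \<Rightarrow> nat) \<Rightarrow> 'd set \<Rightarrow> ('d \<Rightarrow> nat) \<Rightarrow> ('s,'d,'q,'p) dtla \<Rightarrow> bool" where
  "is_dtpla Sig rkS Del rkD M \<longleftrightarrow> is_dtla Sig rkS Del rkD M \<and> card (la M) \<ge> 2"

text \<open>A dtop: a dtla whose only look-ahead state is bot, represented by ().\<close>
definition is_dtop ::
  "'s set \<Rightarrow> ('s \<Rightarrow> nat) \<Rightarrow> 'd set \<Rightarrow> ('d \<Rightarrow> nat) \<Rightarrow> ('s,'d,'q,unit) dtla \<Rightarrow> bool" where
  "is_dtop Sig rkS Del rkD N \<longleftrightarrow> is_dtla Sig rkS Del rkD N \<and> la N = {()}"

definition pref :: "('s,'d,'q,'p) dtla \<Rightarrow> ('s,unit) tr \<Rightarrow> ('d,('q \<times> 'p) option) tr option" where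
  "pref M C = (if \<forall>p\<in>la M. ctx_out M C p \<noteq> None
     then Some (Glb {tmap id Some (the (ctx_out M C p)) | p. p \<in> la M}) else None)"

definition aheadness ::
  "'s set \<Rightarrow> ('s \<Rightarrow> nat) \<Rightarrow> ('s,'d,'q,'p) dtla \<Rightarrow> ('s,'d,'r,unit) dtla
     \<Rightarrow> ('r \<Rightarrow> 'p \<Rightarrow> ('d,'q \<times> 'p) tr) \<Rightarrow> bool" where
  "aheadness Sig rkS M N phi \<longleftrightarrow>
     (\<forall>C p. is_context Sig rkS C \<and> p \<in> la M \<longrightarrow>
        ctx_out M C p = map_option (\<lambda>t. tsubst t (\<lambda>(q, _). phi q p)) (ctx_out N C ()))"

end

theory Submission
  imports Defs
begin

(* Let t = N(C).  By aheadness M(C[p]) = t[<q,bot> <- phi(q,p)], so pref(M,C) is t with every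
   leaf <q,bot> replaced by the meet of the trees phi(q,p), p in P_M; (2) is immediate, and (1)
   says that each of these meets is bot.  The meet is no leaf <q',p>, because phi(q,p) only has
   leaves of look-ahead state p and |P_M| >= 2.  It does not start with an output symbol d
   either: comparing M and N on inputs C[s] via [[M]] = [[N]] shows that the state q of N would
   then output d at the root on every input, contradicting earliness of N. *)

lemma vars_tsubst: "vars (tsubst t F) = (\<Union>x\<in>vars t. vars (F x))"
  by (induction t) auto

lemma labs_tsubst: "labs (tsubst t F) = labs t \<union> (\<Union>x\<in>vars t. labs (F x))"
  by (induction t) auto

lemma tsubst_tsubst: "tsubst (tsubst t F) G = tsubst t (\<lambda>x. tsubst (F x) G)"
  by (induction t) auto

lemma tsubst_cong: "(\<And>x. x \<in> vars t \<Longrightarrow> F x = G x) \<Longrightarrow> tsubst t F = tsubst t G"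
  by (induction t) auto

lemma tmap_tsubst: "tmap id g (tsubst t F) = tsubst t (\<lambda>x. tmap id g (F x))"
  by (induction t) auto

lemma wf_tr_tsubst:
  "wf_tr A rk t \<Longrightarrow> (\<And>x. x \<in> vars t \<Longrightarrow> wf_tr A rk (F x)) \<Longrightarrow> wf_tr A rk (tsubst t F)"
  by (induction t) auto

lemma wf_tr_tmap [simp]: "wf_tr A rk (tmap id g t) = wf_tr A rk t"
  by (induction t) auto

lemma labs_subset_if_wf_tr: "wf_tr A rk t \<Longrightarrow> labs t \<subseteq> A"
  by (induction t) auto

lemma subt_tsubst_Var: "subt t v = Some (Var x) \<Longrightarrow> subt (tsubst t F) v = Some (F x)"
proof (induction v arbitrary: t)
  case (Cons i v)
  then show ?case by (cases t) (auto split: if_splits)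
qed simp

lemma tmap_tsubst_eqD:
  assumes "tmap id g (tsubst t F) = tmap id h (tsubst t G)" and "x \<in> vars t"
  shows "tmap id g (F x) = tmap id h (G x)"
  using assms
proof (induction t)
  case (Sym a ts)
  then obtain u where "u \<in> set ts" "x \<in> vars u" by auto
  with Sym show ?case by (simp add: id_def)
qed simp

lemma osubst_eq:
  "osubst t f = (if \<forall>x\<in>vars t. f x \<noteq> None then Some (tsubst t (\<lambda>x. the (f x))) else None)"
proof (induction t)
  case (Sym a ts)
  show ?case
  proof (cases "\<forall>x\<in>vars (Sym a ts). f x \<noteq> None")
    case True
    with Sym have "\<forall>t\<in>set ts. osubst t f = Some (tsubst t (\<lambda>x. the (f x)))" by auto
    with True show ?thesis by (simp add: Let_def image_iff comp_def cong: map_cong)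
  next
    case False
    then obtain t x where "t \<in> set ts" "x \<in> vars t" "f x = None" by auto
    with Sym have "None \<in> set (map (\<lambda>t. osubst t f) ts)" by force
    with False show ?thesis by (simp add: Let_def)
  qed
qed simp

lemma osubst_cong: "(\<And>x. x \<in> vars t \<Longrightarrow> F x = G x) \<Longrightarrow> osubst t F = osubst t G"
  by (simp add: osubst_eq cong: tsubst_cong)

lemma osubst_tsubst: "osubst (tsubst t F) g = osubst t (\<lambda>x. osubst (F x) g)"
proof (cases "\<forall>x\<in>vars t. \<forall>y\<in>vars (F x). g y \<noteq> None")
  case True
  then have "osubst t (\<lambda>x. osubst (F x) g) = osubst t (\<lambda>x. Some (tsubst (F x) (\<lambda>y. the (g y))))"
    by (intro osubst_cong) (simp add: osubst_eq)
  also have "\<dots> = Some (tsubst t (\<lambda>x. tsubst (F x) (\<lambda>y. the (g y))))"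
    by (simp add: osubst_eq)
  finally show ?thesis
    using True by (simp add: osubst_eq[of "tsubst t F"] vars_tsubst tsubst_tsubst)
next
  case False
  then obtain x y where x: "x \<in> vars t" and "y \<in> vars (F x)" "g y = None" by blast
  then have "osubst (F x) g = None" by (auto simp: osubst_eq)
  with x have "osubst t (\<lambda>x. osubst (F x) g) = None" by (auto simp: osubst_eq[of t])
  with False show ?thesis by (auto simp: osubst_eq[of "tsubst t F"] vars_tsubst)
qed

lemma osubst_bind:
  "Option.bind (osubst t f) (\<lambda>u. osubst u g) = osubst t (\<lambda>x. Option.bind (f x) (\<lambda>u. osubst u g))"
proof (cases "\<forall>x\<in>vars t. f x \<noteq> None")
  case True
  then have "osubst t (\<lambda>x. Option.bind (f x) (\<lambda>u. osubst u g)) = osubst t (\<lambda>x. osubst (the (f x)) g)"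
    by (intro osubst_cong) auto
  with True show ?thesis by (simp add: osubst_eq[of t f] osubst_tsubst)
next
  case False
  then obtain x where "x \<in> vars t" "f x = None" by blast
  then have "osubst t f = None" and "osubst t (\<lambda>x. Option.bind (f x) (\<lambda>u. osubst u g)) = None"
    by (auto simp: osubst_eq[of t] intro!: bexI[of _ x])
  then show ?thesis by simp
qed

lemma dstate_tsubst: "dstate M (tsubst t F) = dstate M (tsubst t (\<lambda>x. Var (dstate M (F x))))"
  by (induction t) (auto cong: map_cong)

lemma qsem_Sym:
  "qsem M q (Sym a ts) = (case rul M q a (map (dstate M) ts) of
     None \<Rightarrow> None
   | Some r \<Rightarrow> osubst r (\<lambda>(q', i). if 1 \<le> i \<and> i \<le> length ts then qsem M q' (ts ! (i - 1)) else None))"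
  by (auto simp: Let_def split: option.split intro!: osubst_cong)

lemma qsem_tsubst_const:
  fixes M :: "('s, 'd, 'q, 'p) dtla"
  shows "qsem M q (tsubst C (\<lambda>_. s)) =
   Option.bind (qsem M q (tsubst C (\<lambda>_. Var (dstate M s)))) (\<lambda>u. osubst u (\<lambda>(q', _). qsem M q' s))"
proof (induction C arbitrary: q)
  case (Sym a ts)
  define H where "H = (\<lambda>u :: ('d, 'q \<times> 'p) tr. osubst u (\<lambda>(q', _). qsem M q' s))"
  define children where "children = (\<lambda>s'. \<lambda>(q', i). if 1 \<le> i \<and> i \<le> length ts
    then qsem M q' (map (\<lambda>t. tsubst t (\<lambda>_. s')) ts ! (i - 1)) else None)"
  have dstates: "map (dstate M) (map (\<lambda>t. tsubst t (\<lambda>_. s)) ts)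
      = map (dstate M) (map (\<lambda>t. tsubst t (\<lambda>_. Var (dstate M s))) ts)"
    by (auto intro: dstate_tsubst)
  have "children s = (\<lambda>x. Option.bind (children (Var (dstate M s)) x) H)"
    using Sym.IH by (auto simp: fun_eq_iff children_def H_def)
  then have "osubst r (children s) = Option.bind (osubst r (children (Var (dstate M s)))) H" for r
    by (simp add: osubst_bind H_def)
  then show ?case
    unfolding tsubst.simps qsem_Sym dstates
    by (simp add: children_def H_def split: option.split)
qed simp

lemma msem_tsubst_const:
  "msem M (tsubst C (\<lambda>_. s)) =
   Option.bind (msem M (tsubst C (\<lambda>_. Var (dstate M s)))) (\<lambda>u. osubst u (\<lambda>(q', _). qsem M q' s))"
proof -
  have dstate_eq: "dstate M (tsubst C (\<lambda>_. s)) = dstate M (tsubst C (\<lambda>_. Var (dstate M s)))"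
    by (rule dstate_tsubst)
  show ?thesis
    unfolding msem_def dstate_eq osubst_bind by (rule osubst_cong, rule qsem_tsubst_const)
qed

lemma dstate_in_la:
  "is_dtla Sig rkS Del rkD M \<Longrightarrow> wf_tr Sig rkS s \<Longrightarrow> vars s \<subseteq> la M \<Longrightarrow> dstate M s \<in> la M"
proof (induction s)
  case (Sym a ts)
  then have "set (map (dstate M) ts) \<subseteq> la M" by auto
  with Sym.prems show ?case unfolding is_dtla_def by auto
qed simp

lemma qsem_labs_vars:
  assumes "is_dtla Sig rkS Del rkD M" and "wf_tr Sig rkS s" and "vars s \<subseteq> la M"
    and "q \<in> st M" and "qsem M q s = Some u"
  shows "labs u \<subseteq> Del \<and> vars u \<subseteq> st M \<times> vars s"
  using assms(2-)
proof (induction s arbitrary: q u)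
  case (Sym a ts)
  have a: "a \<in> Sig" "length ts = rkS a" using Sym.prems(1) by auto
  have ps: "set (map (dstate M) ts) \<subseteq> la M"
  proof clarsimp
    fix t assume "t \<in> set ts"
    with Sym.prems(1,2) have "wf_tr Sig rkS t" "vars t \<subseteq> la M" by auto
    then show "dstate M t \<in> la M" by (rule dstate_in_la[OF assms(1)])
  qed
  obtain r where r: "rul M q a (map (dstate M) ts) = Some r"
    using Sym.prems(4) by (auto simp: qsem_Sym split: option.splits)
  have r_wf: "wf_tr Del rkD r" and r_vars: "vars r \<subseteq> st M \<times> {1..length ts}"
    using assms(1) Sym.prems(3) a ps r unfolding is_dtla_def by (metis length_map)+
  define children where "children = (\<lambda>(q', i). if 1 \<le> i \<and> i \<le> length ts
    then qsem M q' (ts ! (i - 1)) else None)"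
  have "osubst r children = Some u"
    using Sym.prems(4) r unfolding qsem_Sym by (simp add: children_def)
  then have defined: "\<forall>x\<in>vars r. children x \<noteq> None" and u: "u = tsubst r (\<lambda>x. the (children x))"
    by (auto simp: osubst_eq split: if_splits)
  have "labs (the (children x)) \<subseteq> Del \<and> vars (the (children x)) \<subseteq> st M \<times> vars (Sym a ts)"
    if x: "x \<in> vars r" for x
  proof -
    obtain q' i where x_eq: "x = (q', i)" and i: "1 \<le> i" "i \<le> length ts" and q': "q' \<in> st M"
      using r_vars x by (cases x) auto
    then have child: "ts ! (i - 1) \<in> set ts" by auto
    with defined x x_eq i obtain w where w: "qsem M q' (ts ! (i - 1)) = Some w"
      by (auto simp: children_def)
    moreover have "wf_tr Sig rkS (ts ! (i - 1))" "vars (ts ! (i - 1)) \<subseteq> la M"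
      using Sym.prems(1,2) child by auto
    ultimately show ?thesis
      using Sym.IH[OF child _ _ q' w] child x_eq i by (force simp: children_def)
  qed
  with labs_subset_if_wf_tr[OF r_wf] show ?case
    unfolding u labs_tsubst vars_tsubst by blast
qed auto

lemma msem_labs_vars:
  assumes "is_dtla Sig rkS Del rkD M" and "wf_tr Sig rkS s" and "vars s \<subseteq> la M"
    and "msem M s = Some u"
  shows "labs u \<subseteq> Del \<and> vars u \<subseteq> st M \<times> vars s"
proof -
  let ?A = "axm M (dstate M s)"
  have A: "wf_tr Del rkD ?A" "vars ?A \<subseteq> st M"
    using assms(1) dstate_in_la[OF assms(1-3)] unfolding is_dtla_def by auto
  have defined: "\<forall>q\<in>vars ?A. qsem M q s \<noteq> None" and u: "u = tsubst ?A (\<lambda>q. the (qsem M q s))"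
    using assms(4) by (auto simp: msem_def osubst_eq split: if_splits)
  have "labs (the (qsem M q s)) \<subseteq> Del \<and> vars (the (qsem M q s)) \<subseteq> st M \<times> vars s"
    if q: "q \<in> vars ?A" for q
  proof -
    from q defined obtain w where "qsem M q s = Some w" by auto
    with q A(2) qsem_labs_vars[OF assms(1-3), of q w] show ?thesis by auto
  qed
  with labs_subset_if_wf_tr[OF A(1)] show ?thesis
    unfolding u labs_tsubst vars_tsubst by blast
qed

definition bot_glb :: "('a, 'z option) tr set \<Rightarrow> bool" where
  "bot_glb T \<longleftrightarrow> (\<forall>t. (\<forall>u\<in>T. pat_le t u) \<longrightarrow> t = Var None)"

lemma pat_le_antisym: "pat_le t u \<Longrightarrow> pat_le u t \<Longrightarrow> t = u"
proof (induction rule: pat_le.induct)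
  case (bot t)
  then show ?case by (cases rule: pat_le.cases) auto
next
  case (sym ts us a)
  from sym.prems have "list_all2 pat_le us ts" by (cases rule: pat_le.cases) auto
  with sym.IH have "ts = us"
    by (induction ts arbitrary: us) (auto simp: list_all2_Cons1 list_all2_Cons2)
  then show ?case by simp
qed simp

lemma pat_le_SymD:
  "pat_le t (Sym a us) \<Longrightarrow> t = Var None \<or> (\<exists>ts. t = Sym a ts \<and> list_all2 pat_le ts us)"
  by (cases rule: pat_le.cases) auto

lemma bot_glb_tmap_SomeI:
  assumes "\<nexists>z. \<forall>p\<in>P. f p = Var z" and "\<nexists>d. \<forall>p\<in>P. \<exists>us. f p = Sym d us"
  shows "bot_glb {tmap id Some (f p) | p. p \<in> P}"
  unfolding bot_glb_def
proof (intro allI impI)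
  fix t assume lower: "\<forall>u\<in>{tmap id Some (f p) | p. p \<in> P}. pat_le t u"
  show "t = Var None"
  proof (cases t)
    case (Var z)
    have "f p = Var (the z)" if "z \<noteq> None" "p \<in> P" for p
    proof -
      from lower \<open>p \<in> P\<close> have "pat_le t (tmap id Some (f p))" by blast
      with that Var show ?thesis by (cases "f p") (auto elim: pat_le.cases)
    qed
    with assms(1) Var show ?thesis by (cases z) auto
  next
    case (Sym d ts)
    have "\<exists>us. f p = Sym d us" if "p \<in> P" for p
    proof -
      from lower that have "pat_le t (tmap id Some (f p))" by blast
      with Sym show ?thesis by (cases "f p") (auto elim: pat_le.cases)
    qed
    with assms(2) show ?thesis by blast
  qed
qed

lemma Phi_simps [simp]:
  "Phi (Var x) = Var None"
  "Phi (Sym a ts) = Sym a (map Phi ts)"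
  by (simp_all add: Phi_def)

lemma pat_le_Phi_tsubst: "pat_le (Phi t) (tmap id Some (tsubst t F))"
  by (induction t) (auto simp: list_all2_map1 list_all2_map2
      intro!: pat_le.bot pat_le.sym list.rel_refl_strong)

lemma pat_le_Phi_if_lower_bound:
  assumes "P \<noteq> {}" and "\<forall>x\<in>vars t. bot_glb {tmap id Some (F p x) | p. p \<in> P}"
    and "\<forall>p\<in>P. pat_le t' (tmap id Some (tsubst t (F p)))"
  shows "pat_le t' (Phi t)"
  using assms(2,3)
proof (induction t arbitrary: t')
  case (Var x)
  then have "t' = Var None" by (auto simp: bot_glb_def)
  then show ?case by (simp add: pat_le.bot)
next
  case (Sym a us)
  obtain p0 where "p0 \<in> P" using assms(1) by auto
  with Sym.prems(2) consider "t' = Var None" | ts where "t' = Sym a ts" "length ts = length us"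
    by (auto simp: list_all2_lengthD dest!: pat_le_SymD)
  then show ?case
  proof cases
    case 2
    have "pat_le (ts ! n) (Phi (us ! n))" if n: "n < length us" for n
    proof (rule Sym.IH)
      show "us ! n \<in> set us" using n by simp
      show "\<forall>x\<in>vars (us ! n). bot_glb {tmap id Some (F p x) | p. p \<in> P}"
        using Sym.prems(1) nth_mem[OF n] by (auto simp: id_def)
      show "\<forall>p\<in>P. pat_le (ts ! n) (tmap id Some (tsubst (us ! n) (F p)))"
      proof
        fix p assume "p \<in> P"
        with Sym.prems(2) have "pat_le t' (Sym a (map (\<lambda>u. tmap id Some (tsubst u (F p))) us))"
          by (simp add: comp_def id_def)
        with 2 have "list_all2 pat_le ts (map (\<lambda>u. tmap id Some (tsubst u (F p))) us)"
          by (auto dest: pat_le_SymD)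
        with n show "pat_le (ts ! n) (tmap id Some (tsubst (us ! n) (F p)))"
          using list_all2_nthD2 by fastforce
      qed
    qed
    with 2 show ?thesis by (auto intro!: pat_le.sym list_all2_all_nthI)
  qed (simp add: pat_le.bot)
qed

lemma Glb_tsubst_eq_Phi:
  assumes "P \<noteq> {}" and "\<forall>x\<in>vars t. bot_glb {tmap id Some (F p x) | p. p \<in> P}"
  shows "Glb {tmap id Some (tsubst t (F p)) | p. p \<in> P} = Phi t"
  unfolding Glb_def
proof (rule the_equality)
  show glb: "is_glb {tmap id Some (tsubst t (F p)) | p. p \<in> P} (Phi t)"
    unfolding is_glb_def by (blast intro: pat_le_Phi_tsubst pat_le_Phi_if_lower_bound[OF assms])
  show "b = Phi t" if "is_glb {tmap id Some (tsubst t (F p)) | p. p \<in> P} b" for b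
    using that glb by (auto simp: is_glb_def intro: pat_le_antisym)
qed

lemma ctx_out_labs_vars:
  assumes "is_dtla Sig rkS Del rkD M" and "is_context Sig rkS C" and "p \<in> la M"
    and "ctx_out M C p = Some t"
  shows "labs t \<subseteq> Del \<and> vars t \<subseteq> st M \<times> {p}"
proof -
  have "wf_tr Sig rkS (tsubst C (\<lambda>_. Var p))"
    using assms(2) by (auto simp: is_context_def intro: wf_tr_tsubst)
  moreover have "vars (tsubst C (\<lambda>_. Var p)) \<subseteq> {p}" by (auto simp: vars_tsubst)
  ultimately show ?thesis
    using msem_labs_vars[OF assms(1)] assms(3,4) unfolding ctx_out_def by blast
qed

lemma aheadness_ctx_out:
  "aheadness Sig rkS M N phi \<Longrightarrow> is_context Sig rkS C \<Longrightarrow> p \<in> la M \<Longrightarrow> ctx_out N C () = Some t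
    \<Longrightarrow> ctx_out M C p = Some (tsubst t (\<lambda>(q, _). phi q p))"
  by (simp add: aheadness_def)

lemma aheadness_labs_vars:
  assumes "is_dtla Sig rkS Del rkD M" and "aheadness Sig rkS M N phi" and "is_context Sig rkS C"
    and "ctx_out N C () = Some t" and "(q, ()) \<in> vars t" and "p \<in> la M"
  shows "labs (phi q p) \<subseteq> Del \<and> vars (phi q p) \<subseteq> st M \<times> {p}"
  using ctx_out_labs_vars[OF assms(1,3,6) aheadness_ctx_out[OF assms(2,3,6,4)]] assms(5)
  by (force simp: labs_tsubst vars_tsubst)

lemma aheadness_erase_eq:
  fixes M :: "('s, 'd, 'q, 'p) dtla" and N :: "('s, 'd, 'r, unit) dtla"
  assumes "is_dtla Sig rkS Del rkD M" and "total Sig rkS M" and "total Sig rkS N"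
    and "same_transl Sig rkS M N" and "aheadness Sig rkS M N phi" and "is_context Sig rkS C"
    and "ctx_out N C () = Some t" and "(q, ()) \<in> vars t"
    and "ground Sig rkS sM" and "ground Sig rkS s" and "erase sM = erase s"
  shows "\<exists>wM wN. osubst (phi q (dstate M sM)) (\<lambda>(q', _). qsem M q' sM) = Some wM
    \<and> qsem N q s = Some wN \<and> erase wM = erase wN"
proof -
  define p where "p = dstate M sM"
  define GM where "GM = (\<lambda>(q' :: 'q, _ :: 'p). qsem M q' sM)"
  define GN where "GN = (\<lambda>(q' :: 'r, _ :: unit). qsem N q' s)"
  have p: "p \<in> la M"
    using assms(9) dstate_in_la[OF assms(1)] by (auto simp: p_def ground_def)
  have ground_C: "ground Sig rkS (tsubst C (\<lambda>_. s'))" if "ground Sig rkS s'" for s' :: "('s, 'v) tr"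
    using that assms(6) by (auto simp: ground_def is_context_def vars_tsubst intro: wf_tr_tsubst)
  define F where "F = (\<lambda>(q, _ :: unit). phi q p)"
  have "msem M (tsubst C (\<lambda>_. sM)) = osubst t (\<lambda>x. osubst (F x) GM)"
    using msem_tsubst_const[of M C sM] aheadness_ctx_out[OF assms(5,6) p assms(7)]
    by (simp add: ctx_out_def p_def GM_def F_def osubst_tsubst)
  moreover have "msem N (tsubst C (\<lambda>_. s)) = osubst t GN"
    using msem_tsubst_const[of N C s] assms(7) by (simp add: ctx_out_def GN_def)
  moreover have "map_option erase (msem M (tsubst C (\<lambda>_. sM)))
      = map_option erase (msem N (tsubst C (\<lambda>_. s)))"
    using assms(4,11) ground_C[OF assms(9)] ground_C[OF assms(10)]
    by (simp add: same_transl_def erase_def tmap_tsubst)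
  moreover have "msem M (tsubst C (\<lambda>_. sM)) \<noteq> None" "msem N (tsubst C (\<lambda>_. s)) \<noteq> None"
    using assms(2,3) ground_C[OF assms(9)] ground_C[OF assms(10)] by (auto simp: total_def)
  ultimately have "\<forall>x\<in>vars t. osubst (F x) GM \<noteq> None" "\<forall>x\<in>vars t. GN x \<noteq> None"
    and "erase (tsubst t (\<lambda>x. the (osubst (F x) GM))) = erase (tsubst t (\<lambda>x. the (GN x)))"
    by (auto simp: osubst_eq[of t] split: if_splits)
  with assms(8) show ?thesis
    unfolding erase_def by (force simp: F_def GM_def GN_def p_def dest: tmap_tsubst_eqD)
qed

lemma earliest_no_common_root:
  fixes M :: "('s, 'd, 'q, 'p) dtla" and N :: "('s, 'd, 'r, unit) dtla"
  assumes "is_dtla Sig rkS Del rkD M" and "total Sig rkS M" and "total Sig rkS N"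
    and "same_transl Sig rkS M N" and "aheadness Sig rkS M N phi" and "is_context Sig rkS C"
    and "ctx_out N C () = Some t" and "(q, ()) \<in> vars t"
    and "earliest Sig rkS Del N" and "q \<in> st N" and "d \<in> Del"
  shows "\<exists>p\<in>la M. \<forall>us. phi q p \<noteq> Sym d us"
proof (rule ccontr)
  assume "\<not> ?thesis"
  then have root: "\<forall>p\<in>la M. \<exists>us. phi q p = Sym d us" by blast
  have "\<exists>ts. qsem N q s = Some (Sym d ts)" if "s \<in> qdom Sig rkS N q" for s
  proof -
    \<comment> \<open>s is ground, so relabelling its leaves only changes its type to an input type of M\<close>
    define sM :: "('s, 'p) tr" where "sM = tmap id (\<lambda>_. undefined) s"
    have s: "ground Sig rkS s" using that by (simp add: qdom_def)
    then have sM: "ground Sig rkS sM" "erase sM = erase s"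
      by (simp add: sM_def ground_def tr.set_map, simp add: sM_def erase_def tr.map_comp comp_def id_def)
    then obtain wM wN where wM: "osubst (phi q (dstate M sM)) (\<lambda>(q', _). qsem M q' sM) = Some wM"
      and wN: "qsem N q s = Some wN" and erase: "erase wM = erase wN"
      using aheadness_erase_eq[OF assms(1-8) _ s] by blast
    have "dstate M sM \<in> la M"
      using sM(1) dstate_in_la[OF assms(1)] by (auto simp: ground_def)
    with root obtain us where "phi q (dstate M sM) = Sym d us" by blast
    with wM erase wN show ?thesis
      by (cases wN) (auto simp: osubst_eq erase_def split: if_splits)
  qed
  with assms(9-11) show False unfolding earliest_def by blast
qed

lemma aheadness_leaf_bot_glb:
  fixes M :: "('s, 'd, 'q, 'p) dtla" and N :: "('s, 'd, 'r, unit) dtla"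
  assumes "is_dtpla Sig rkS Del rkD M" and "total Sig rkS M" and "total Sig rkS N"
    and "same_transl Sig rkS M N" and "aheadness Sig rkS M N phi" and "is_context Sig rkS C"
    and "ctx_out N C () = Some t" and "(q, ()) \<in> vars t"
    and "is_dtop Sig rkS Del rkD N" and "earliest Sig rkS Del N"
  shows "bot_glb {tmap id Some (phi q p) | p. p \<in> la M}"
proof (rule bot_glb_tmap_SomeI)
  have M: "is_dtla Sig rkS Del rkD M" and card: "card (la M) \<ge> 2"
    using assms(1) by (auto simp: is_dtpla_def)
  have phi: "labs (phi q p) \<subseteq> Del \<and> vars (phi q p) \<subseteq> st M \<times> {p}" if "p \<in> la M" for p
    using aheadness_labs_vars[OF M assms(5,6,7,8) that] .
  show "\<nexists>z. \<forall>p\<in>la M. phi q p = Var z"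
  proof
    assume "\<exists>z. \<forall>p\<in>la M. phi q p = Var z"
    then obtain z where "\<forall>p\<in>la M. phi q p = Var z" ..
    with phi have "la M \<subseteq> {snd z}" by fastforce
    then have "card (la M) \<le> 1" using card_mono[of "{snd z}"] by fastforce
    with card show False by simp
  qed
  have q: "q \<in> st N"
    using ctx_out_labs_vars[of Sig rkS Del rkD N C "()" t] assms(6-9) by (auto simp: is_dtop_def)
  obtain p0 where p0: "p0 \<in> la M" using card by (metis all_not_in_conv card.empty not_numeral_le_zero)
  show "\<nexists>d. \<forall>p\<in>la M. \<exists>us. phi q p = Sym d us"
  proof
    assume "\<exists>d. \<forall>p\<in>la M. \<exists>us. phi q p = Sym d us"
    then obtain d where d: "\<forall>p\<in>la M. \<exists>us. phi q p = Sym d us" ..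
    with phi[OF p0] p0 have "d \<in> Del" by force
    with earliest_no_common_root[OF M assms(2-8,10) q] d show False by blast
  qed
qed

theorem mainTheorem4:
  fixes Sig :: "'s set" and rkS :: "'s \<Rightarrow> nat" and Del :: "'d set" and rkD :: "'d \<Rightarrow> nat"
    and M :: "('s,'d,'q,'p) dtla" and N :: "('s,'d,'r,unit) dtla"
    and phi :: "'r \<Rightarrow> 'p \<Rightarrow> ('d,'q \<times> 'p) tr" and C :: "('s,unit) tr"
  assumes "is_dtpla Sig rkS Del rkD M" and "canonical Sig rkS Del rkD M"
    and "is_dtop Sig rkS Del rkD N" and "earliest Sig rkS Del N" and "total Sig rkS N"
    and "\<forall>q\<in>st N. reachable Sig rkS N q"
    and "same_transl Sig rkS M N"
    and "aheadness Sig rkS M N phi"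
    and "is_context Sig rkS C"
  shows "map_option Phi (ctx_out N C ()) = pref M C
    \<and> (\<forall>v q p t. q \<in> st N \<and> p \<in> la M \<and> ctx_out N C () = Some t \<and> subt t v = Some (Var (q, ()))
           \<longrightarrow> (\<exists>t'. ctx_out M C p = Some t' \<and> subt t' v = Some (phi q p)))"
proof -
  have la_M: "la M \<noteq> {}" using assms(1) by (auto simp: is_dtpla_def)
  have total_M: "total Sig rkS M" using assms(2) by (simp add: canonical_def)
  note ctx_out_M = aheadness_ctx_out[OF assms(8,9)]
  have "map_option Phi (ctx_out N C ()) = pref M C"
  proof (cases "ctx_out N C ()")
    case None
    with assms(8,9) la_M show ?thesis by (auto simp: pref_def aheadness_def)
  next
    case (Some t)
    have "\<forall>x\<in>vars t. bot_glb {tmap id Some ((\<lambda>(q, _). phi q p) x) | p. p \<in> la M}"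
      using aheadness_leaf_bot_glb[OF assms(1) total_M assms(5,7-9) Some _ assms(3,4)] by auto
    then have "Glb {tmap id Some (tsubst t (\<lambda>(q, _). phi q p)) | p. p \<in> la M} = Phi t"
      by (rule Glb_tsubst_eq_Phi[OF la_M])
    moreover have "{tmap id Some (the (ctx_out M C p)) | p. p \<in> la M}
        = {tmap id Some (tsubst t (\<lambda>(q, _). phi q p)) | p. p \<in> la M}"
      using ctx_out_M Some by force
    ultimately show ?thesis using Some by (simp add: pref_def ctx_out_M)
  qed
  moreover have "\<exists>t'. ctx_out M C p = Some t' \<and> subt t' v = Some (phi q p)"
    if "p \<in> la M" "ctx_out N C () = Some t" "subt t v = Some (Var (q, ()))" for v q p t
    using ctx_out_M[OF that(1,2)] subt_tsubst_Var[OF that(3), of "\<lambda>(q, _). phi q p"] by simp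
  ultimately show ?thesis by blast
qed

end
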